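(* Consider a team-against-team zero-sum game with standard Borel state space $\Omega_0$, Team 1 (minimizer, $N_1$ players) and Team 2 (maximizer, $N_2$ players), standard Borel measurement spaces $\mathbb{Y}^j_i$, compact standard Borel action spaces $\mathbb{U}^j_i$, and a cost $c:\Omega_0\times\prod_j\mathbb{U}^j_1\times\prod_j\mathbb{U}^j_2\to\mathbb{R}$ that is measurable, bounded and continuous in the players' actions for every $\omega_0$. Each team uses team policies with common randomness within the team (randomness independent across teams). Consider information structures (probability measures on $\Omega_0\times\prod_j\mathbb{Y}^j_1\times\prod_j\mathbb{Y}^j_2$) such that for each team $i$ the marginal on $\Omega_0\times\prod_{j}\mathbb{Y}^j_i$ is absolutely continuous with respect to a product $\mu_{0}\otimes\bigotimes_j\bar Q^j_i$ of probability measures, so that a saddle-point equilibrium exists with value $J^*(c,\cdot)$. Then $J^*(c,\cdot)$ is continuous under total variation on this class: if $\mu_n,\mu$ belong to this class and $\|\mu_n-\mu\|_{TV}\to0$, then $J^*(c,\mu_n)\to J^*(c,\mu)$.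
   Context: Team policies with common randomness: $u^j_i=\gamma^j_i(y^j_i,z_i)$ where $z_i\in[0,1]^{N_i}$ is independent of the state and measurements and of the other team's randomness. The equilibrium value $J^*(c,\mu)$ is the common value of $\inf_{\bar\gamma_1}\sup_{\bar\gamma_2}$ and $\sup_{\bar\gamma_2}\inf_{\bar\gamma_1}$ of $E^{\mu,\bar\gamma_1,\bar\gamma_2}[c(\omega_0,u_1,u_2)]$. $\|P-Q\|_{TV}=\sup_{\|f\|_\infty\le1}|\int f\,dP-\int f\,dQ|$. *)

theory Defs
  imports "HOL-Probability.Probability"
begin

text \<open>Borel subset of a Polish type, viewed as a standard Borel measurable space.\<close>
definition sb :: "'a::topological_space set \<Rightarrow> 'a measure" where
  "sb A = restrict_space borel A"

definition rand_space :: "nat \<Rightarrow> (nat \<Rightarrow> real) measure" where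
  "rand_space N = PiM {..<N} (\<lambda>_. restrict_space borel {0..1::real})"

text \<open>Team policies with common randomness: a distribution eta of the common
  randomness z and, for each player j < N, a measurable policy gamma j : Y_j x [0,1]^N \<rightarrow> U_j.\<close>
definition team_policies ::
  "nat \<Rightarrow> (nat \<Rightarrow> 'y::topological_space set) \<Rightarrow> (nat \<Rightarrow> 'u::topological_space set)
   \<Rightarrow> ((nat \<Rightarrow> real) measure \<times> (nat \<Rightarrow> 'y \<times> (nat \<Rightarrow> real) \<Rightarrow> 'u)) set" where
  "team_policies N Y U = {(\<eta>, \<gamma>). prob_space \<eta> \<and> sets \<eta> = sets (rand_space N) \<and>
      (\<forall>j<N. \<gamma> j \<in> measurable (sb (Y j) \<Otimes>\<^sub>M rand_space N) (sb (U j)))}"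

definition act :: "nat \<Rightarrow> (nat \<Rightarrow> 'y \<times> (nat \<Rightarrow> real) \<Rightarrow> 'u) \<Rightarrow> (nat \<Rightarrow> 'y) \<Rightarrow> (nat \<Rightarrow> real) \<Rightarrow> (nat \<Rightarrow> 'u)" where
  "act N \<gamma> y z = (\<lambda>j\<in>{..<N}. \<gamma> j (y j, z))"

text \<open>Expected cost E^{mu, gamma1, gamma2}[c(omega0,u1,u2)]; the common randomness of the two teams
  is independent of each other and of (omega0, y1, y2).\<close>
definition exp_cost ::
  "nat \<Rightarrow> nat \<Rightarrow> ('o \<Rightarrow> (nat \<Rightarrow> 'u1) \<Rightarrow> (nat \<Rightarrow> 'u2) \<Rightarrow> real)
   \<Rightarrow> ('o \<times> (nat \<Rightarrow> 'y1) \<times> (nat \<Rightarrow> 'y2)) measure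
   \<Rightarrow> (nat \<Rightarrow> real) measure \<times> (nat \<Rightarrow> 'y1 \<times> (nat \<Rightarrow> real) \<Rightarrow> 'u1)
   \<Rightarrow> (nat \<Rightarrow> real) measure \<times> (nat \<Rightarrow> 'y2 \<times> (nat \<Rightarrow> real) \<Rightarrow> 'u2) \<Rightarrow> real" where
  "exp_cost N1 N2 c \<mu> p1 p2 =
     (\<integral>x. (case x of (((\<omega>, y1, y2), z1), z2) \<Rightarrow>
              c \<omega> (act N1 (snd p1) y1 z1) (act N2 (snd p2) y2 z2))
        \<partial>((\<mu> \<Otimes>\<^sub>M fst p1) \<Otimes>\<^sub>M fst p2))"

definition upper_value where
  "upper_value N1 N2 Y1 Y2 U1 U2 c \<mu> =
     (INF p1\<in>team_policies N1 Y1 U1. SUP p2\<in>team_policies N2 Y2 U2. exp_cost N1 N2 c \<mu> p1 p2)"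

definition lower_value where
  "lower_value N1 N2 Y1 Y2 U1 U2 c \<mu> =
     (SUP p2\<in>team_policies N2 Y2 U2. INF p1\<in>team_policies N1 Y1 U1. exp_cost N1 N2 c \<mu> p1 p2)"

definition tv_dist :: "'a measure \<Rightarrow> 'a measure \<Rightarrow> 'a measure \<Rightarrow> real" where
  "tv_dist M P Q = (SUP f\<in>{f \<in> borel_measurable M. \<forall>x\<in>space M. \<bar>f x\<bar> \<le> 1}.
      \<bar>(\<integral>x. f x \<partial>P) - (\<integral>x. f x \<partial>Q)\<bar>)"

definition info_class ::
  "nat \<Rightarrow> nat \<Rightarrow> 'o::topological_space set \<Rightarrow> (nat \<Rightarrow> 'y1::topological_space set)
   \<Rightarrow> (nat \<Rightarrow> 'y2::topological_space set) \<Rightarrow> ('o \<times> (nat \<Rightarrow> 'y1) \<times> (nat \<Rightarrow> 'y2)) measure \<Rightarrow> bool" where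
  "info_class N1 N2 \<Omega>0 Y1 Y2 \<mu> \<longleftrightarrow>
     prob_space \<mu> \<and>
     sets \<mu> = sets (sb \<Omega>0 \<Otimes>\<^sub>M (PiM {..<N1} (\<lambda>j. sb (Y1 j)) \<Otimes>\<^sub>M PiM {..<N2} (\<lambda>j. sb (Y2 j)))) \<and>
     (\<exists>\<mu>0 Q. prob_space \<mu>0 \<and> sets \<mu>0 = sets (sb \<Omega>0) \<and>
        (\<forall>j<N1. prob_space (Q j) \<and> sets (Q j) = sets (sb (Y1 j))) \<and>
        absolutely_continuous (\<mu>0 \<Otimes>\<^sub>M PiM {..<N1} Q)
          (distr \<mu> (sb \<Omega>0 \<Otimes>\<^sub>M PiM {..<N1} (\<lambda>j. sb (Y1 j))) (\<lambda>(\<omega>, y1, y2). (\<omega>, y1)))) \<and>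
     (\<exists>\<mu>0 Q. prob_space \<mu>0 \<and> sets \<mu>0 = sets (sb \<Omega>0) \<and>
        (\<forall>j<N2. prob_space (Q j) \<and> sets (Q j) = sets (sb (Y2 j))) \<and>
        absolutely_continuous (\<mu>0 \<Otimes>\<^sub>M PiM {..<N2} Q)
          (distr \<mu> (sb \<Omega>0 \<Otimes>\<^sub>M PiM {..<N2} (\<lambda>j. sb (Y2 j))) (\<lambda>(\<omega>, y1, y2). (\<omega>, y2))))"

end

theory Submission
  imports Defs
begin

(* Integrating out the common randomness of the two teams (Fubini)
   turns the expected cost into the integral, against the information structure, of a single
   measurable function bounded by a bound K of c. Hence the expected cost moves by at most K times
   the total variation distance when the information structure changes, uniformly in the
   policies; as inf-sup and sup-inf are 1-Lipschitz for the uniform norm, so do the upper and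
   lower values. *)

lemma (in prob_space) abs_integral_le_const:
  fixes f :: "'a \<Rightarrow> real"
  assumes bound: "\<And>x. x \<in> space M \<Longrightarrow> \<bar>f x\<bar> \<le> B"
  shows "\<bar>\<integral>x. f x \<partial>M\<bar> \<le> B"
proof (cases "integrable M f")
  case True
  then have "(\<integral>x. \<bar>f x\<bar> \<partial>M) \<le> B"
    using bound by (intro integral_le_const AE_I2) auto
  then show ?thesis
    using integral_abs_bound[of M f] by linarith
next
  case False
  obtain x where "x \<in> space M"
    using not_empty by blast
  then show ?thesis
    using bound[of x] False by (simp add: not_integrable_integral_eq)
qed

lemma integral_pair_prob_space:
  fixes F :: "'a \<times> 'b \<Rightarrow> real"
  assumes "prob_space M" "prob_space N"
    and F: "F \<in> borel_measurable (M \<Otimes>\<^sub>M N)" and bound: "\<And>w. w \<in> space (M \<Otimes>\<^sub>M N) \<Longrightarrow> \<bar>F w\<bar> \<le> B"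
  shows "(\<integral>w. F w \<partial>(M \<Otimes>\<^sub>M N)) = (\<integral>x. (\<integral>y. F (x, y) \<partial>N) \<partial>M)"
proof -
  interpret M: prob_space M by fact
  interpret N: prob_space N by fact
  interpret MN: pair_prob_space M N ..
  have "integrable (M \<Otimes>\<^sub>M N) F"
    using F bound by (intro MN.integrable_const_bound[where B=B]) auto
  then show ?thesis
    by (rule MN.integral_fst'[symmetric])
qed

lemma abs_integral_diff_le_tv_dist_unit:
  fixes f :: "'a \<Rightarrow> real"
  assumes P: "prob_space P" "sets P = sets M" and Q: "prob_space Q" "sets Q = sets M"
    and f: "f \<in> borel_measurable M" and bound: "\<And>x. x \<in> space M \<Longrightarrow> \<bar>f x\<bar> \<le> 1"
  shows "\<bar>(\<integral>x. f x \<partial>P) - (\<integral>x. f x \<partial>Q)\<bar> \<le> tv_dist M P Q"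
proof -
  define S where "S = {f \<in> borel_measurable M. \<forall>x\<in>space M. \<bar>f x\<bar> \<le> (1::real)}"
  have integral_le: "\<bar>\<integral>x. g x \<partial>R\<bar> \<le> 1" if "prob_space R" "sets R = sets M" "g \<in> S" for g R
  proof -
    have "space R = space M"
      using that(2) by (rule sets_eq_imp_space_eq)
    then show ?thesis
      using that prob_space.abs_integral_le_const[of R g 1] by (simp add: S_def)
  qed
  have "\<bar>(\<integral>x. g x \<partial>P) - (\<integral>x. g x \<partial>Q)\<bar> \<le> 2" if "g \<in> S" for g
    using integral_le[OF P that] integral_le[OF Q that]
      abs_triangle_ineq4[of "\<integral>x. g x \<partial>P" "\<integral>x. g x \<partial>Q"] by linarith
  then have "bdd_above ((\<lambda>g. \<bar>(\<integral>x. g x \<partial>P) - (\<integral>x. g x \<partial>Q)\<bar>) ` S)"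
    by (intro bdd_aboveI2)
  moreover have "f \<in> S"
    using f bound by (simp add: S_def)
  ultimately show ?thesis
    unfolding tv_dist_def S_def[symmetric] by (intro cSUP_upper)
qed

lemma tv_dist_nonneg:
  assumes "prob_space P" "sets P = sets M" "prob_space Q" "sets Q = sets M"
  shows "0 \<le> tv_dist M P Q"
  using abs_integral_diff_le_tv_dist_unit[OF assms, of "\<lambda>_. 0"] by simp

lemma abs_integral_diff_le_tv_dist:
  fixes f :: "'a \<Rightarrow> real"
  assumes P: "prob_space P" "sets P = sets M" and Q: "prob_space Q" "sets Q = sets M"
    and f: "f \<in> borel_measurable M" and bound: "\<And>x. x \<in> space M \<Longrightarrow> \<bar>f x\<bar> \<le> K"
  shows "\<bar>(\<integral>x. f x \<partial>P) - (\<integral>x. f x \<partial>Q)\<bar> \<le> K * tv_dist M P Q"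
proof (cases "K = 0")
  case True
  then have "AE x in R. f x = 0" if "sets R = sets M" for R
    using bound sets_eq_imp_space_eq[OF that] by (intro AE_I2) force
  then show ?thesis
    using P(2) Q(2) True by (simp add: integral_eq_zero_AE)
next
  case False
  obtain x where "x \<in> space M"
    using prob_space.not_empty[OF P(1)] sets_eq_imp_space_eq[OF P(2)] by auto
  with bound False have "0 < K"
    by (metis abs_ge_zero order.trans order.not_eq_order_implies_strict)
  have "\<bar>(\<integral>x. f x / K \<partial>P) - (\<integral>x. f x / K \<partial>Q)\<bar> \<le> tv_dist M P Q"
    using f bound \<open>0 < K\<close>
    by (intro abs_integral_diff_le_tv_dist_unit[OF P Q]) (auto simp: divide_le_eq_1)
  then show ?thesis
    using \<open>0 < K\<close> by (simp add: diff_divide_distrib[symmetric] divide_le_eq mult.commute)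
qed

lemma INF_real_eq_uminus_SUP:
  fixes f :: "'a \<Rightarrow> real"
  shows "(INF x\<in>A. f x) = - (SUP x\<in>A. - f x)"
  by (simp add: Inf_real_def image_image)

lemma cSUP_abs_le:
  fixes f :: "'a \<Rightarrow> real"
  assumes "A \<noteq> {}" and "\<And>x. x \<in> A \<Longrightarrow> \<bar>f x\<bar> \<le> K"
  shows "\<bar>SUP x\<in>A. f x\<bar> \<le> K"
proof -
  obtain a where a: "a \<in> A" using assms(1) by blast
  have "bdd_above (f ` A)"
    using assms(2) by (intro bdd_aboveI2[where M=K]) force
  then have "f a \<le> (SUP x\<in>A. f x)"
    using a by (rule cSUP_upper2) simp
  moreover have "(SUP x\<in>A. f x) \<le> K"
    using assms by (intro cSUP_least) (auto dest: abs_le_D1)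
  ultimately show ?thesis
    using assms(2)[OF a] by linarith
qed

lemma cSUP_abs_diff_le:
  fixes f g :: "'a \<Rightarrow> real"
  assumes close: "\<And>x. x \<in> A \<Longrightarrow> \<bar>f x - g x\<bar> \<le> d" and "0 \<le> d"
    and f: "\<And>x. x \<in> A \<Longrightarrow> \<bar>f x\<bar> \<le> K" and g: "\<And>x. x \<in> A \<Longrightarrow> \<bar>g x\<bar> \<le> K"
  shows "\<bar>(SUP x\<in>A. f x) - (SUP x\<in>A. g x)\<bar> \<le> d"
proof (cases "A = {}")
  case False
  have "bdd_above (f ` A)" "bdd_above (g ` A)"
    using f g by (auto intro!: bdd_aboveI2[where M=K] dest: abs_le_D1)
  note bdd = this
  have "f x \<le> (SUP x\<in>A. g x) + d" "g x \<le> (SUP x\<in>A. f x) + d" if "x \<in> A" for x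
    using close[OF that] cSUP_upper[OF that bdd(1)] cSUP_upper[OF that bdd(2)] by (auto simp: abs_le_iff)
  then have "(SUP x\<in>A. f x) \<le> (SUP x\<in>A. g x) + d" "(SUP x\<in>A. g x) \<le> (SUP x\<in>A. f x) + d"
    by (auto intro!: cSUP_least False)
  then show ?thesis
    by (simp add: abs_le_iff)
qed (simp add: \<open>0 \<le> d\<close>)

lemma cINF_abs_diff_le:
  fixes f g :: "'a \<Rightarrow> real"
  assumes "\<And>x. x \<in> A \<Longrightarrow> \<bar>f x - g x\<bar> \<le> d" "0 \<le> d"
    and "\<And>x. x \<in> A \<Longrightarrow> \<bar>f x\<bar> \<le> K" "\<And>x. x \<in> A \<Longrightarrow> \<bar>g x\<bar> \<le> K"
  shows "\<bar>(INF x\<in>A. f x) - (INF x\<in>A. g x)\<bar> \<le> d"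
  using cSUP_abs_diff_le[of A "\<lambda>x. - f x" "\<lambda>x. - g x" d K] assms
  by (simp add: INF_real_eq_uminus_SUP abs_minus_commute)

lemma INF_SUP_abs_diff_le:
  fixes f g :: "'a \<Rightarrow> 'b \<Rightarrow> real"
  assumes "\<And>a b. a \<in> A \<Longrightarrow> b \<in> B \<Longrightarrow> \<bar>f a b - g a b\<bar> \<le> d" "0 \<le> d"
    and "\<And>a b. a \<in> A \<Longrightarrow> b \<in> B \<Longrightarrow> \<bar>f a b\<bar> \<le> K"
    and "\<And>a b. a \<in> A \<Longrightarrow> b \<in> B \<Longrightarrow> \<bar>g a b\<bar> \<le> K"
  shows "\<bar>(INF a\<in>A. SUP b\<in>B. f a b) - (INF a\<in>A. SUP b\<in>B. g a b)\<bar> \<le> d"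
proof (cases "B = {}")
  case False
  show ?thesis
    using assms
    by (intro cINF_abs_diff_le[where K=K] cSUP_abs_diff_le[where K=K] cSUP_abs_le[OF False]) auto
qed (simp add: \<open>0 \<le> d\<close>)

lemma SUP_INF_eq_uminus_INF_SUP:
  fixes f :: "'a \<Rightarrow> 'b \<Rightarrow> real"
  shows "(SUP b\<in>B. INF a\<in>A. f a b) = - (INF b\<in>B. SUP a\<in>A. - f a b)"
  by (simp add: INF_real_eq_uminus_SUP)

lemma SUP_INF_abs_diff_le:
  fixes f g :: "'a \<Rightarrow> 'b \<Rightarrow> real"
  assumes "\<And>a b. a \<in> A \<Longrightarrow> b \<in> B \<Longrightarrow> \<bar>f a b - g a b\<bar> \<le> d" "0 \<le> d"
    and "\<And>a b. a \<in> A \<Longrightarrow> b \<in> B \<Longrightarrow> \<bar>f a b\<bar> \<le> K"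
    and "\<And>a b. a \<in> A \<Longrightarrow> b \<in> B \<Longrightarrow> \<bar>g a b\<bar> \<le> K"
  shows "\<bar>(SUP b\<in>B. INF a\<in>A. f a b) - (SUP b\<in>B. INF a\<in>A. g a b)\<bar> \<le> d"
  using INF_SUP_abs_diff_le[of B A "\<lambda>b a. - f a b" "\<lambda>b a. - g a b" d K] assms
  by (simp add: SUP_INF_eq_uminus_INF_SUP abs_minus_commute)

lemma tendsto_abs_diff_le_null:
  fixes f g :: "'a \<Rightarrow> real"
  assumes "\<And>x. \<bar>f x - l\<bar> \<le> g x" and "(g \<longlongrightarrow> 0) F"
  shows "(f \<longlongrightarrow> l) F"
proof (intro metric_tendsto_imp_tendsto[OF assms(2) always_eventually] allI)
  fix x
  show "dist (f x) l \<le> dist (g x) 0"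
    using assms(1)[of x] abs_ge_self[of "g x"] by (simp add: dist_real_def)
qed

definition joint_space ::
  "'a::topological_space set \<Rightarrow> nat \<Rightarrow> (nat \<Rightarrow> 'b::topological_space set)
   \<Rightarrow> nat \<Rightarrow> (nat \<Rightarrow> 'c::topological_space set) \<Rightarrow> ('a \<times> (nat \<Rightarrow> 'b) \<times> (nat \<Rightarrow> 'c)) measure" where
  "joint_space A N1 B1 N2 B2 = sb A \<Otimes>\<^sub>M (PiM {..<N1} (\<lambda>j. sb (B1 j)) \<Otimes>\<^sub>M PiM {..<N2} (\<lambda>j. sb (B2 j)))"

definition realized_cost ::
  "nat \<Rightarrow> nat \<Rightarrow> ('o \<Rightarrow> (nat \<Rightarrow> 'u1) \<Rightarrow> (nat \<Rightarrow> 'u2) \<Rightarrow> real)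
   \<Rightarrow> (nat \<Rightarrow> real) measure \<times> (nat \<Rightarrow> 'y1 \<times> (nat \<Rightarrow> real) \<Rightarrow> 'u1)
   \<Rightarrow> (nat \<Rightarrow> real) measure \<times> (nat \<Rightarrow> 'y2 \<times> (nat \<Rightarrow> real) \<Rightarrow> 'u2)
   \<Rightarrow> (('o \<times> (nat \<Rightarrow> 'y1) \<times> (nat \<Rightarrow> 'y2)) \<times> (nat \<Rightarrow> real)) \<times> (nat \<Rightarrow> real) \<Rightarrow> real" where
  "realized_cost N1 N2 c p1 p2 =
     (\<lambda>(((\<omega>, y1, y2), z1), z2). c \<omega> (act N1 (snd p1) y1 z1) (act N2 (snd p2) y2 z2))"

definition averaged_cost ::
  "nat \<Rightarrow> nat \<Rightarrow> ('o \<Rightarrow> (nat \<Rightarrow> 'u1) \<Rightarrow> (nat \<Rightarrow> 'u2) \<Rightarrow> real)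
   \<Rightarrow> (nat \<Rightarrow> real) measure \<times> (nat \<Rightarrow> 'y1 \<times> (nat \<Rightarrow> real) \<Rightarrow> 'u1)
   \<Rightarrow> (nat \<Rightarrow> real) measure \<times> (nat \<Rightarrow> 'y2 \<times> (nat \<Rightarrow> real) \<Rightarrow> 'u2)
   \<Rightarrow> 'o \<times> (nat \<Rightarrow> 'y1) \<times> (nat \<Rightarrow> 'y2) \<Rightarrow> real" where
  "averaged_cost N1 N2 c p1 p2 x =
     (\<integral>z1. (\<integral>z2. realized_cost N1 N2 c p1 p2 ((x, z1), z2) \<partial>fst p2) \<partial>fst p1)"

lemma exp_cost_eq_integral_realized_cost:
  "exp_cost N1 N2 c \<mu> p1 p2 = (\<integral>x. realized_cost N1 N2 c p1 p2 x \<partial>((\<mu> \<Otimes>\<^sub>M fst p1) \<Otimes>\<^sub>M fst p2))"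
  unfolding exp_cost_def realized_cost_def
  by (rule arg_cong[where f="integral\<^sup>L _"]) (auto split: prod.split)

lemma prob_space_team_policy: "p \<in> team_policies N Y U \<Longrightarrow> prob_space (fst p)"
  by (auto simp: team_policies_def)

lemma sets_team_policy: "p \<in> team_policies N Y U \<Longrightarrow> sets (fst p) = sets (rand_space N)"
  by (auto simp: team_policies_def)

lemma measurable_act:
  assumes p: "p \<in> team_policies N Y U"
    and fy: "fy \<in> measurable X (PiM {..<N} (\<lambda>j. sb (Y j)))" and fz: "fz \<in> measurable X (rand_space N)"
  shows "(\<lambda>x. act N (snd p) (fy x) (fz x)) \<in> measurable X (PiM {..<N} (\<lambda>j. sb (U j)))"
  unfolding act_def
proof (rule measurable_restrict)
  fix j assume j: "j \<in> {..<N}"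
  then have "snd p j \<in> measurable (sb (Y j) \<Otimes>\<^sub>M rand_space N) (sb (U j))"
    using p by (auto simp: team_policies_def)
  moreover have "(\<lambda>x. (fy x j, fz x)) \<in> measurable X (sb (Y j) \<Otimes>\<^sub>M rand_space N)"
    by (rule measurable_Pair[OF measurable_compose[OF fy measurable_component_singleton[OF j]] fz])
  ultimately show "(\<lambda>x. snd p j (fy x j, fz x)) \<in> measurable X (sb (U j))"
    by (simp add: measurable_compose)
qed

lemma act_in_PiE:
  assumes p: "p \<in> team_policies N Y U"
    and y: "y \<in> space (PiM {..<N} (\<lambda>j. sb (Y j)))" and z: "z \<in> space (rand_space N)"
  shows "act N (snd p) y z \<in> PiE {..<N} U"
proof -
  have "(\<lambda>_. act N (snd p) y z) \<in> measurable (count_space {()}) (PiM {..<N} (\<lambda>j. sb (U j)))"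
    using y z by (intro measurable_act[OF p] measurable_const)
  from measurable_space[OF this, of "()"] show ?thesis
    by (simp add: space_PiM sb_def space_restrict_space)
qed

context
  fixes N1 N2 :: nat
    and \<Omega>0 :: "'o::topological_space set"
    and Y1 :: "nat \<Rightarrow> 'y1::topological_space set" and Y2 :: "nat \<Rightarrow> 'y2::topological_space set"
    and U1 :: "nat \<Rightarrow> 'u1::topological_space set" and U2 :: "nat \<Rightarrow> 'u2::topological_space set"
    and c :: "'o \<Rightarrow> (nat \<Rightarrow> 'u1) \<Rightarrow> (nat \<Rightarrow> 'u2) \<Rightarrow> real" and K :: real
  assumes c_meas: "(\<lambda>(\<omega>, u1, u2). c \<omega> u1 u2) \<in> borel_measurable (joint_space \<Omega>0 N1 U1 N2 U2)"
    and c_bound: "\<And>\<omega> u1 u2. \<omega> \<in> \<Omega>0 \<Longrightarrow> u1 \<in> PiE {..<N1} U1 \<Longrightarrow> u2 \<in> PiE {..<N2} U2 \<Longrightarrow>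
      \<bar>c \<omega> u1 u2\<bar> \<le> K"
begin

context
  fixes p1 :: "(nat \<Rightarrow> real) measure \<times> (nat \<Rightarrow> 'y1 \<times> (nat \<Rightarrow> real) \<Rightarrow> 'u1)"
    and p2 :: "(nat \<Rightarrow> real) measure \<times> (nat \<Rightarrow> 'y2 \<times> (nat \<Rightarrow> real) \<Rightarrow> 'u2)"
  assumes p1: "p1 \<in> team_policies N1 Y1 U1" and p2: "p2 \<in> team_policies N2 Y2 U2"
begin

interpretation \<eta>1: prob_space "fst p1"
  by (rule prob_space_team_policy[OF p1])

interpretation \<eta>2: prob_space "fst p2"
  by (rule prob_space_team_policy[OF p2])

lemma measurable_realized_cost:
  assumes M: "sets M = sets (joint_space \<Omega>0 N1 Y1 N2 Y2)"
  shows "realized_cost N1 N2 c p1 p2 \<in> borel_measurable ((M \<Otimes>\<^sub>M fst p1) \<Otimes>\<^sub>M fst p2)"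
proof -
  let ?X = "(joint_space \<Omega>0 N1 Y1 N2 Y2 \<Otimes>\<^sub>M rand_space N1) \<Otimes>\<^sub>M rand_space N2"
  have \<omega>: "(\<lambda>x. fst (fst (fst x))) \<in> measurable ?X (sb \<Omega>0)"
    unfolding joint_space_def by (intro measurable_fst'' measurable_fst)
  have y1: "(\<lambda>x. fst (snd (fst (fst x)))) \<in> measurable ?X (PiM {..<N1} (\<lambda>j. sb (Y1 j)))"
    unfolding joint_space_def by (intro measurable_fst'' measurable_snd'' measurable_fst)
  have y2: "(\<lambda>x. snd (snd (fst (fst x)))) \<in> measurable ?X (PiM {..<N2} (\<lambda>j. sb (Y2 j)))"
    unfolding joint_space_def by (intro measurable_fst'' measurable_snd'' measurable_snd)
  have z1: "(\<lambda>x. snd (fst x)) \<in> measurable ?X (rand_space N1)"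
    by (intro measurable_fst'' measurable_snd)
  have z2: "snd \<in> measurable ?X (rand_space N2)"
    by (rule measurable_snd)
  have "(\<lambda>x. (fst (fst (fst x)), act N1 (snd p1) (fst (snd (fst (fst x)))) (snd (fst x)),
      act N2 (snd p2) (snd (snd (fst (fst x)))) (snd x))) \<in> measurable ?X (joint_space \<Omega>0 N1 U1 N2 U2)"
    unfolding joint_space_def[of \<Omega>0 N1 U1 N2 U2]
    by (rule measurable_Pair[OF \<omega> measurable_Pair[OF measurable_act[OF p1 y1 z1] measurable_act[OF p2 y2 z2]]])
  from measurable_compose[OF this c_meas] have "realized_cost N1 N2 c p1 p2 \<in> borel_measurable ?X"
    by (simp add: realized_cost_def split_beta')
  moreover have "sets (fst p1) = sets (rand_space N1)" "sets (fst p2) = sets (rand_space N2)"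
    using sets_team_policy[OF p1] sets_team_policy[OF p2] .
  then have "measurable ((M \<Otimes>\<^sub>M fst p1) \<Otimes>\<^sub>M fst p2) (borel :: real measure) = borel_measurable ?X"
    by (intro measurable_cong_sets sets_pair_measure_cong M) auto
  ultimately show ?thesis
    by simp
qed

lemma realized_cost_abs_le:
  assumes M: "sets M = sets (joint_space \<Omega>0 N1 Y1 N2 Y2)"
    and x: "x \<in> space ((M \<Otimes>\<^sub>M fst p1) \<Otimes>\<^sub>M fst p2)"
  shows "\<bar>realized_cost N1 N2 c p1 p2 x\<bar> \<le> K"
proof -
  obtain \<omega> y1 y2 z1 z2 where x_eq: "x = (((\<omega>, y1, y2), z1), z2)"
    by (metis prod.collapse)
  have "space M = space (joint_space \<Omega>0 N1 Y1 N2 Y2)"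
    "space (fst p1) = space (rand_space N1)" "space (fst p2) = space (rand_space N2)"
    using sets_eq_imp_space_eq[OF M] sets_eq_imp_space_eq[OF sets_team_policy[OF p1]]
      sets_eq_imp_space_eq[OF sets_team_policy[OF p2]] by simp_all
  moreover have "(\<omega>, y1, y2) \<in> space M" "z1 \<in> space (fst p1)" "z2 \<in> space (fst p2)"
    using x by (simp_all add: x_eq space_pair_measure)
  ultimately have \<omega>: "\<omega> \<in> space (sb \<Omega>0)"
    and y: "y1 \<in> space (PiM {..<N1} (\<lambda>j. sb (Y1 j)))" "y2 \<in> space (PiM {..<N2} (\<lambda>j. sb (Y2 j)))"
    and z: "z1 \<in> space (rand_space N1)" "z2 \<in> space (rand_space N2)"
    by (simp_all add: joint_space_def space_pair_measure)
  have "\<omega> \<in> \<Omega>0"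
    using \<omega> by (simp add: sb_def space_restrict_space)
  then have "\<bar>c \<omega> (act N1 (snd p1) y1 z1) (act N2 (snd p2) y2 z2)\<bar> \<le> K"
    by (rule c_bound[OF _ act_in_PiE[OF p1 y(1) z(1)] act_in_PiE[OF p2 y(2) z(2)]])
  then show ?thesis
    by (simp only: realized_cost_def x_eq prod.case)
qed

lemma measurable_averaged_cost:
  "averaged_cost N1 N2 c p1 p2 \<in> borel_measurable (joint_space \<Omega>0 N1 Y1 N2 Y2)"
proof -
  have "(\<lambda>w. \<integral>z2. realized_cost N1 N2 c p1 p2 (w, z2) \<partial>fst p2)
      \<in> borel_measurable (joint_space \<Omega>0 N1 Y1 N2 Y2 \<Otimes>\<^sub>M fst p1)"
    using measurable_realized_cost[OF refl] by (intro \<eta>2.borel_measurable_lebesgue_integral) simp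
  then show ?thesis
    unfolding averaged_cost_def by (intro \<eta>1.borel_measurable_lebesgue_integral) simp
qed

lemma averaged_cost_abs_le:
  "x \<in> space (joint_space \<Omega>0 N1 Y1 N2 Y2) \<Longrightarrow> \<bar>averaged_cost N1 N2 c p1 p2 x\<bar> \<le> K"
  unfolding averaged_cost_def
  by (intro \<eta>1.abs_integral_le_const \<eta>2.abs_integral_le_const realized_cost_abs_le[OF refl])
    (simp add: space_pair_measure)

lemma exp_cost_eq_integral_averaged_cost:
  assumes P: "prob_space P" "sets P = sets (joint_space \<Omega>0 N1 Y1 N2 Y2)"
  shows "exp_cost N1 N2 c P p1 p2 = (\<integral>x. averaged_cost N1 N2 c p1 p2 x \<partial>P)"
proof -
  let ?R = "realized_cost N1 N2 c p1 p2"
  define G where "G w = (\<integral>z2. ?R (w, z2) \<partial>fst p2)" for w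
  have G_meas: "G \<in> borel_measurable (P \<Otimes>\<^sub>M fst p1)"
    unfolding G_def using measurable_realized_cost[OF P(2)]
    by (intro \<eta>2.borel_measurable_lebesgue_integral) simp
  have G_bound: "\<bar>G w\<bar> \<le> K" if "w \<in> space (P \<Otimes>\<^sub>M fst p1)" for w
    unfolding G_def using that
    by (intro \<eta>2.abs_integral_le_const realized_cost_abs_le[OF P(2)]) (simp add: space_pair_measure)
  have "exp_cost N1 N2 c P p1 p2 = (\<integral>x. ?R x \<partial>((P \<Otimes>\<^sub>M fst p1) \<Otimes>\<^sub>M fst p2))"
    by (rule exp_cost_eq_integral_realized_cost)
  also have "\<dots> = (\<integral>w. G w \<partial>(P \<Otimes>\<^sub>M fst p1))"
    unfolding G_def
    using prob_space_pair[OF P(1) \<eta>1.prob_space_axioms] \<eta>2.prob_space_axioms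
      measurable_realized_cost[OF P(2)] realized_cost_abs_le[OF P(2)]
    by (rule integral_pair_prob_space)
  also have "\<dots> = (\<integral>x. (\<integral>z1. G (x, z1) \<partial>fst p1) \<partial>P)"
    using P(1) \<eta>1.prob_space_axioms G_meas G_bound by (rule integral_pair_prob_space)
  finally show ?thesis
    by (simp add: averaged_cost_def G_def)
qed

lemma exp_cost_abs_le:
  assumes P: "prob_space P" "sets P = sets (joint_space \<Omega>0 N1 Y1 N2 Y2)"
  shows "\<bar>exp_cost N1 N2 c P p1 p2\<bar> \<le> K"
  unfolding exp_cost_eq_integral_averaged_cost[OF P]
  using averaged_cost_abs_le sets_eq_imp_space_eq[OF P(2)]
  by (intro prob_space.abs_integral_le_const[OF P(1)]) simp

lemma exp_cost_abs_diff_le_tv_dist: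
  assumes P: "prob_space P" "sets P = sets (joint_space \<Omega>0 N1 Y1 N2 Y2)"
    and Q: "prob_space Q" "sets Q = sets (joint_space \<Omega>0 N1 Y1 N2 Y2)"
  shows "\<bar>exp_cost N1 N2 c P p1 p2 - exp_cost N1 N2 c Q p1 p2\<bar>
    \<le> K * tv_dist (joint_space \<Omega>0 N1 Y1 N2 Y2) P Q"
  unfolding exp_cost_eq_integral_averaged_cost[OF P] exp_cost_eq_integral_averaged_cost[OF Q]
  using P Q measurable_averaged_cost averaged_cost_abs_le
  by (rule abs_integral_diff_le_tv_dist)

end

lemma upper_value_abs_diff_le_tv_dist:
  assumes "0 \<le> K"
    and P: "prob_space P" "sets P = sets (joint_space \<Omega>0 N1 Y1 N2 Y2)"
    and Q: "prob_space Q" "sets Q = sets (joint_space \<Omega>0 N1 Y1 N2 Y2)"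
  shows "\<bar>upper_value N1 N2 Y1 Y2 U1 U2 c P - upper_value N1 N2 Y1 Y2 U1 U2 c Q\<bar>
    \<le> K * tv_dist (joint_space \<Omega>0 N1 Y1 N2 Y2) P Q"
  unfolding upper_value_def
  using exp_cost_abs_diff_le_tv_dist[OF _ _ P Q] mult_nonneg_nonneg[OF \<open>0 \<le> K\<close> tv_dist_nonneg[OF P Q]]
    exp_cost_abs_le[OF _ _ P] exp_cost_abs_le[OF _ _ Q]
  by (rule INF_SUP_abs_diff_le)

lemma lower_value_abs_diff_le_tv_dist:
  assumes "0 \<le> K"
    and P: "prob_space P" "sets P = sets (joint_space \<Omega>0 N1 Y1 N2 Y2)"
    and Q: "prob_space Q" "sets Q = sets (joint_space \<Omega>0 N1 Y1 N2 Y2)"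
  shows "\<bar>lower_value N1 N2 Y1 Y2 U1 U2 c P - lower_value N1 N2 Y1 Y2 U1 U2 c Q\<bar>
    \<le> K * tv_dist (joint_space \<Omega>0 N1 Y1 N2 Y2) P Q"
  unfolding lower_value_def
  using exp_cost_abs_diff_le_tv_dist[OF _ _ P Q] mult_nonneg_nonneg[OF \<open>0 \<le> K\<close> tv_dist_nonneg[OF P Q]]
    exp_cost_abs_le[OF _ _ P] exp_cost_abs_le[OF _ _ Q]
  by (rule SUP_INF_abs_diff_le)

end

theorem theorem9:
  fixes N1 N2 :: nat
    and \<Omega>0 :: "'o::polish_space set"
    and Y1 :: "nat \<Rightarrow> 'y1::polish_space set" and Y2 :: "nat \<Rightarrow> 'y2::polish_space set"
    and U1 :: "nat \<Rightarrow> 'u1::polish_space set" and U2 :: "nat \<Rightarrow> 'u2::polish_space set"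
    and c :: "'o \<Rightarrow> (nat \<Rightarrow> 'u1) \<Rightarrow> (nat \<Rightarrow> 'u2) \<Rightarrow> real"
    and \<mu>s :: "nat \<Rightarrow> ('o \<times> (nat \<Rightarrow> 'y1) \<times> (nat \<Rightarrow> 'y2)) measure"
    and \<mu> :: "('o \<times> (nat \<Rightarrow> 'y1) \<times> (nat \<Rightarrow> 'y2)) measure"
  assumes \<Omega>0: "\<Omega>0 \<in> sets borel"
    and Y1: "\<forall>j<N1. Y1 j \<in> sets borel" and Y2: "\<forall>j<N2. Y2 j \<in> sets borel"
    and U1: "\<forall>j<N1. compact (U1 j) \<and> U1 j \<noteq> {}"
    and U2: "\<forall>j<N2. compact (U2 j) \<and> U2 j \<noteq> {}"
    and c_meas: "(\<lambda>(\<omega>, u1, u2). c \<omega> u1 u2) \<in> borel_measurable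
        (sb \<Omega>0 \<Otimes>\<^sub>M (PiM {..<N1} (\<lambda>j. sb (U1 j)) \<Otimes>\<^sub>M PiM {..<N2} (\<lambda>j. sb (U2 j))))"
    and c_bdd: "\<exists>B. \<forall>\<omega>\<in>\<Omega>0. \<forall>u1\<in>PiE {..<N1} U1. \<forall>u2\<in>PiE {..<N2} U2. \<bar>c \<omega> u1 u2\<bar> \<le> B"
    and c_cont: "\<forall>\<omega>\<in>\<Omega>0. continuous_on (PiE {..<N1} U1 \<times> PiE {..<N2} U2) (\<lambda>(u1, u2). c \<omega> u1 u2)"
    and cls_n: "\<forall>n. info_class N1 N2 \<Omega>0 Y1 Y2 (\<mu>s n)"
    and cls: "info_class N1 N2 \<Omega>0 Y1 Y2 \<mu>"
    and tv: "(\<lambda>n. tv_dist (sb \<Omega>0 \<Otimes>\<^sub>M (PiM {..<N1} (\<lambda>j. sb (Y1 j)) \<Otimes>\<^sub>M PiM {..<N2} (\<lambda>j. sb (Y2 j))))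
                (\<mu>s n) \<mu>) \<longlonglongrightarrow> 0"
  shows "(\<lambda>n. upper_value N1 N2 Y1 Y2 U1 U2 c (\<mu>s n)) \<longlonglongrightarrow> upper_value N1 N2 Y1 Y2 U1 U2 c \<mu>
       \<and> (\<lambda>n. lower_value N1 N2 Y1 Y2 U1 U2 c (\<mu>s n)) \<longlonglongrightarrow> lower_value N1 N2 Y1 Y2 U1 U2 c \<mu>"
proof -
  let ?M = "joint_space \<Omega>0 N1 Y1 N2 Y2"
  obtain B where B: "\<forall>\<omega>\<in>\<Omega>0. \<forall>u1\<in>PiE {..<N1} U1. \<forall>u2\<in>PiE {..<N2} U2. \<bar>c \<omega> u1 u2\<bar> \<le> B"
    using c_bdd by blast
  have c_bound: "\<bar>c \<omega> u1 u2\<bar> \<le> \<bar>B\<bar>"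
    if "\<omega> \<in> \<Omega>0" "u1 \<in> PiE {..<N1} U1" "u2 \<in> PiE {..<N2} U2" for \<omega> u1 u2
    using B that by force
  note c_meas = c_meas[folded joint_space_def]
  have \<mu>: "prob_space \<mu>" "sets \<mu> = sets ?M" and \<mu>s: "prob_space (\<mu>s n)" "sets (\<mu>s n) = sets ?M" for n
    using cls cls_n by (auto simp: info_class_def joint_space_def)
  have tv_null: "(\<lambda>n. \<bar>B\<bar> * tv_dist ?M (\<mu>s n) \<mu>) \<longlonglongrightarrow> 0"
    using tendsto_mult_right_zero[OF tv[folded joint_space_def]] .
  note upper = upper_value_abs_diff_le_tv_dist[OF c_meas c_bound abs_ge_zero \<mu>s \<mu>]
  note lower = lower_value_abs_diff_le_tv_dist[OF c_meas c_bound abs_ge_zero \<mu>s \<mu>]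
  show ?thesis
    using tendsto_abs_diff_le_null[OF upper tv_null] tendsto_abs_diff_le_null[OF lower tv_null] ..
qed

end
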